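(* Let $d$ be an even positive integer. Then $\tilde M^{(d)}$ equals the set of submatrices, indexed by $[N]^{d/2}\times[N]^{d/2}$, of matrices $\bm Z\in M^{(d)}$.
   Context: For a finite alphabet $[N]$, $[N]^{\le k}$ is the set of strings (including the empty string) of length at most $k$ over $[N]$; $\bm s\circ\bm t$ is concatenation; $\mathsf{odd}(\bm s)$ is the set of symbols occurring an odd number of times in $\bm s$. $M^{(d)}$ (degree $d$ complete pseudomoment matrices) is the set of real matrices $\bm Z$ with rows and columns indexed by $[N]^{\le d/2}$ such that (1) $\bm Z\succeq 0$; (2) $Z_{\bm s\bm t}$ depends only on $\mathsf{odd}(\bm s\circ\bm t)$; (3) $Z_{\bm s\bm t} = 1$ whenever $\mathsf{odd}(\bm s\circ\bm t)=\emptyset$. $\tilde M^{(d)}$ (degree $d$ truncated pseudomoment matrices) is the set of real matrices $\tilde{\bm Z}$ with rows and columns indexed by $[N]^{d/2}$ (strings of length exactly $d/2$) satisfying the same three conditions for $\bm s,\bm t\in[N]^{d/2}$. *)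

theory Defs
  imports Complex_Main
begin

text \<open>Matrices indexed by strings are functions nat list => nat list => real; a matrix with
index set I is required to vanish outside I x I (so that it is determined by its I x I block).\<close>

definition strs_le :: "nat \<Rightarrow> nat \<Rightarrow> nat list set" where
  "strs_le N k = {s. set s \<subseteq> {1..N} \<and> length s \<le> k}"

definition strs_eq :: "nat \<Rightarrow> nat \<Rightarrow> nat list set" where
  "strs_eq N k = {s. set s \<subseteq> {1..N} \<and> length s = k}"

definition odd_syms :: "nat list \<Rightarrow> nat set" where
  "odd_syms s = {a. odd (count_list s a)}"

definition psd_on :: "nat list set \<Rightarrow> (nat list \<Rightarrow> nat list \<Rightarrow> real) \<Rightarrow> bool" where
  "psd_on I Z \<longleftrightarrow> (\<forall>s\<in>I. \<forall>t\<in>I. Z s t = Z t s) \<and>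
     (\<forall>v :: nat list \<Rightarrow> real. 0 \<le> (\<Sum>s\<in>I. \<Sum>t\<in>I. v s * Z s t * v t))"

definition pseudomoment_on :: "nat list set \<Rightarrow> (nat list \<Rightarrow> nat list \<Rightarrow> real) \<Rightarrow> bool" where
  "pseudomoment_on I Z \<longleftrightarrow>
     (\<forall>s t. s \<notin> I \<or> t \<notin> I \<longrightarrow> Z s t = 0) \<and>
     psd_on I Z \<and>
     (\<forall>s\<in>I. \<forall>t\<in>I. \<forall>s'\<in>I. \<forall>t'\<in>I.
        odd_syms (s @ t) = odd_syms (s' @ t') \<longrightarrow> Z s t = Z s' t') \<and>
     (\<forall>s\<in>I. \<forall>t\<in>I. odd_syms (s @ t) = {} \<longrightarrow> Z s t = 1)"

definition complete_pm :: "nat \<Rightarrow> nat \<Rightarrow> (nat list \<Rightarrow> nat list \<Rightarrow> real) set" where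
  "complete_pm N d = {Z. pseudomoment_on (strs_le N (d div 2)) Z}"

definition truncated_pm :: "nat \<Rightarrow> nat \<Rightarrow> (nat list \<Rightarrow> nat list \<Rightarrow> real) set" where
  "truncated_pm N d = {Z. pseudomoment_on (strs_eq N (d div 2)) Z}"

definition submatrix :: "nat list set \<Rightarrow> (nat list \<Rightarrow> nat list \<Rightarrow> real) \<Rightarrow> nat list \<Rightarrow> nat list \<Rightarrow> real" where
  "submatrix I Z = (\<lambda>s t. if s \<in> I \<and> t \<in> I then Z s t else 0)"

end

theory Submission
  imports Defs
begin

text \<open>Restricting a complete pseudomoment matrix to the strings of length exactly d/2 clearly
gives a truncated one. Conversely, pad every string of length at most d/2 with the symbol 1 up
to length d/2 and set Z s t to the truncated entry of the padded pair when s and t have lengths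
of equal parity, and to 0 otherwise. Padding both strings by lengths of equal parity does not
change the set of odd symbols, and equal odd-symbol sets force equal length parities, so Z
inherits the symmetry constraints; Z is positive semidefinite because it is the direct sum of
the pullbacks of the truncated matrix along padding on the two parity classes.\<close>

lemma odd_syms_subset_set: "odd_syms xs \<subseteq> set xs"
  unfolding odd_syms_def using count_notin by fastforce

lemma even_length_iff_even_card_odd_syms: "even (length xs) \<longleftrightarrow> even (card (odd_syms xs))"
proof -
  have "length xs = sum (count_list xs) (set xs)"
    by (simp add: sum_count_set)
  moreover have "{a \<in> set xs. odd (count_list xs a)} = odd_syms xs"
    using odd_syms_subset_set by (auto simp: odd_syms_def)
  ultimately show ?thesis
    by (simp add: even_sum_iff)
qed

lemma even_length_append_eq_if_odd_syms_eq:
  assumes "odd_syms (s @ t) = odd_syms (s' @ t')"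
  shows "even (length s + length t) \<longleftrightarrow> even (length s' + length t')"
  using even_length_iff_even_card_odd_syms[of "s @ t"]
    even_length_iff_even_card_odd_syms[of "s' @ t'"] assms
  by simp

lemma count_list_replicate: "count_list (replicate n a) x = (if x = a then n else 0)"
  by (induction n) auto

lemma odd_syms_append_replicate:
  assumes "even (m + n)"
  shows "odd_syms (s @ replicate m a @ t @ replicate n a) = odd_syms (s @ t)"
  using assms by (auto simp: odd_syms_def count_list_replicate)

lemma finite_strs_le: "finite (strs_le N k)"
  unfolding strs_le_def by (rule finite_lists_length_le) simp

lemma finite_strs_eq: "finite (strs_eq N k)"
  unfolding strs_eq_def by (rule finite_lists_length_eq) simp

lemma strs_eq_subset_strs_le: "strs_eq N k \<subseteq> strs_le N k"
  unfolding strs_eq_def strs_le_def by auto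

lemma quadratic_form_nonneg_pullback:
  fixes Z :: "'b \<Rightarrow> 'b \<Rightarrow> real" and f :: "'a \<Rightarrow> 'b"
  assumes fin: "finite I" "finite J" and f: "f ` I \<subseteq> J"
    and nonneg: "\<forall>v. 0 \<le> (\<Sum>s\<in>J. \<Sum>t\<in>J. v s * Z s t * v t)"
  shows "0 \<le> (\<Sum>s\<in>I. \<Sum>t\<in>I. w s * Z (f s) (f t) * w t)"
proof -
  define W where "W u = (\<Sum>s\<in>{s\<in>I. f s = u}. w s)" for u
  have collect: "(\<Sum>s\<in>I. g (f s) * w s) = (\<Sum>u\<in>J. g u * W u)" for g :: "'b \<Rightarrow> real"
  proof -
    have "(\<Sum>s\<in>I. g (f s) * w s) = (\<Sum>u\<in>J. \<Sum>s\<in>{s\<in>I. f s = u}. g (f s) * w s)"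
      by (rule sum.group[OF fin f, symmetric])
    also have "\<dots> = (\<Sum>u\<in>J. g u * W u)"
      by (simp add: W_def sum_distrib_left)
    finally show ?thesis .
  qed
  have row: "(\<Sum>t\<in>I. Z (f s) (f t) * w t) = (\<Sum>u'\<in>J. Z (f s) u' * W u')" for s
    by (rule collect)
  have "(\<Sum>s\<in>I. \<Sum>t\<in>I. w s * Z (f s) (f t) * w t)
        = (\<Sum>s\<in>I. (\<Sum>t\<in>I. Z (f s) (f t) * w t) * w s)"
    by (simp add: sum_distrib_left sum_distrib_right mult_ac)
  also have "\<dots> = (\<Sum>s\<in>I. (\<Sum>u'\<in>J. Z (f s) u' * W u') * w s)"
    by (simp only: row)
  also have "\<dots> = (\<Sum>u\<in>J. (\<Sum>u'\<in>J. Z u u' * W u') * W u)"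
    by (rule collect)
  also have "\<dots> = (\<Sum>u\<in>J. \<Sum>u'\<in>J. W u * Z u u' * W u')"
    by (simp add: sum_distrib_left sum_distrib_right mult_ac)
  finally show ?thesis
    using nonneg by simp
qed

lemma quadratic_form_nonneg_pullback_blocks:
  fixes Z :: "'b \<Rightarrow> 'b \<Rightarrow> real" and f :: "'a \<Rightarrow> 'b" and c :: "'a \<Rightarrow> bool"
  assumes "finite I" "finite J" "f ` I \<subseteq> J"
    and "\<forall>v. 0 \<le> (\<Sum>s\<in>J. \<Sum>t\<in>J. v s * Z s t * v t)"
  shows "0 \<le> (\<Sum>s\<in>I. \<Sum>t\<in>I. v s * (if c s = c t then Z (f s) (f t) else 0) * v t)"
proof -
  define w where "w p s = (if c s = p then v s else 0)" for p s
  have "(\<Sum>s\<in>I. \<Sum>t\<in>I. v s * (if c s = c t then Z (f s) (f t) else 0) * v t)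
        = (\<Sum>s\<in>I. \<Sum>t\<in>I. \<Sum>p\<in>UNIV. w p s * Z (f s) (f t) * w p t)"
    by (intro sum.cong refl) (simp add: w_def UNIV_bool)
  also have "\<dots> = (\<Sum>s\<in>I. \<Sum>p\<in>UNIV. \<Sum>t\<in>I. w p s * Z (f s) (f t) * w p t)"
    by (intro sum.cong refl sum.swap)
  also have "\<dots> = (\<Sum>p\<in>UNIV. \<Sum>s\<in>I. \<Sum>t\<in>I. w p s * Z (f s) (f t) * w p t)"
    by (rule sum.swap)
  also have "\<dots> \<ge> 0"
    by (intro sum_nonneg quadratic_form_nonneg_pullback) (use assms in auto)
  finally show ?thesis .
qed

lemma psd_on_cong:
  assumes "\<And>s t. s \<in> I \<Longrightarrow> t \<in> I \<Longrightarrow> Z s t = Z' s t"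
  shows "psd_on I Z \<longleftrightarrow> psd_on I Z'"
proof -
  have "(\<Sum>s\<in>I. \<Sum>t\<in>I. v s * Z s t * v t) = (\<Sum>s\<in>I. \<Sum>t\<in>I. v s * Z' s t * v t)" for v
    using assms by (intro sum.cong) auto
  then show ?thesis
    using assms unfolding psd_on_def by metis
qed

lemma psd_on_subset:
  assumes psd: "psd_on I Z" and J: "J \<subseteq> I" and fin: "finite I"
  shows "psd_on J Z"
  unfolding psd_on_def
proof (intro conjI ballI allI)
  fix s t assume "s \<in> J" "t \<in> J"
  then show "Z s t = Z t s"
    using psd J unfolding psd_on_def by blast
next
  fix v :: "nat list \<Rightarrow> real"
  show "0 \<le> (\<Sum>s\<in>J. \<Sum>t\<in>J. v s * Z s t * v t)"
    using quadratic_form_nonneg_pullback[of J I id Z v] psd J fin finite_subset[OF J fin]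
    unfolding psd_on_def by simp
qed

lemma submatrix_eq_self:
  assumes "pseudomoment_on I Z"
  shows "submatrix I Z = Z"
proof -
  have "\<forall>s t. s \<notin> I \<or> t \<notin> I \<longrightarrow> Z s t = 0"
    using assms unfolding pseudomoment_on_def by blast
  then show ?thesis
    unfolding submatrix_def by fastforce
qed

lemma pseudomoment_on_submatrix:
  assumes Z: "pseudomoment_on I Z" and J: "J \<subseteq> I" and fin: "finite I"
  shows "pseudomoment_on J (submatrix J Z)"
  unfolding pseudomoment_on_def
proof (intro conjI allI impI ballI)
  show "psd_on J (submatrix J Z)"
  proof -
    have "psd_on J Z"
      using psd_on_subset[OF _ J fin] Z unfolding pseudomoment_on_def by blast
    moreover have "submatrix J Z s t = Z s t" if "s \<in> J" "t \<in> J" for s t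
      using that unfolding submatrix_def by simp
    ultimately show ?thesis
      using psd_on_cong[of J "submatrix J Z" Z] by blast
  qed
next
  fix s t s' t' assume "s \<in> J" "t \<in> J" "s' \<in> J" "t' \<in> J"
    and "odd_syms (s @ t) = odd_syms (s' @ t')"
  then show "submatrix J Z s t = submatrix J Z s' t'"
    using Z J unfolding pseudomoment_on_def submatrix_def by (simp add: subset_iff)
next
  fix s t assume "s \<in> J" "t \<in> J" "odd_syms (s @ t) = {}"
  then show "submatrix J Z s t = 1"
    using Z J unfolding pseudomoment_on_def submatrix_def by (simp add: subset_iff)
qed (auto simp: submatrix_def)

definition pad :: "nat \<Rightarrow> nat list \<Rightarrow> nat list" where
  "pad k s = s @ replicate (k - length s) 1"

definition padded_extension ::
    "nat \<Rightarrow> nat \<Rightarrow> (nat list \<Rightarrow> nat list \<Rightarrow> real) \<Rightarrow> nat list \<Rightarrow> nat list \<Rightarrow> real" where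
  "padded_extension N k Z = (\<lambda>s t.
     if s \<in> strs_le N k \<and> t \<in> strs_le N k \<and> even (length s) = even (length t)
     then Z (pad k s) (pad k t) else 0)"

lemma pad_in_strs_eq: "0 < N \<Longrightarrow> s \<in> strs_le N k \<Longrightarrow> pad k s \<in> strs_eq N k"
  unfolding pad_def strs_le_def strs_eq_def by auto

lemma pad_strs_eq: "s \<in> strs_eq N k \<Longrightarrow> pad k s = s"
  unfolding pad_def strs_eq_def by simp

lemma odd_syms_pad:
  assumes "length s \<le> k" "length t \<le> k" "even (length s) = even (length t)"
  shows "odd_syms (pad k s @ pad k t) = odd_syms (s @ t)"
proof -
  have "even ((k - length s) + (k - length t))"
    using assms by presburger
  then show ?thesis
    unfolding pad_def using odd_syms_append_replicate by simp
qed

lemma pseudomoment_on_padded_extension: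
  assumes N: "0 < N" and Z: "pseudomoment_on (strs_eq N k) Z"
  shows "pseudomoment_on (strs_le N k) (padded_extension N k Z)"
proof -
  let ?I = "strs_le N k" and ?J = "strs_eq N k" and ?E = "padded_extension N k Z"
  from Z obtain Z_sym: "\<forall>s\<in>?J. \<forall>t\<in>?J. Z s t = Z t s"
    and Z_psd: "\<forall>v. 0 \<le> (\<Sum>s\<in>?J. \<Sum>t\<in>?J. v s * Z s t * v t)"
    and Z_odd_syms: "\<forall>s\<in>?J. \<forall>t\<in>?J. \<forall>s'\<in>?J. \<forall>t'\<in>?J.
      odd_syms (s @ t) = odd_syms (s' @ t') \<longrightarrow> Z s t = Z s' t'"
    and Z_one: "\<forall>s\<in>?J. \<forall>t\<in>?J. odd_syms (s @ t) = {} \<longrightarrow> Z s t = 1"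
    unfolding pseudomoment_on_def psd_on_def by blast
  have pad_in: "pad k s \<in> ?J" if "s \<in> ?I" for s
    using pad_in_strs_eq[OF N that] .
  have odd_syms_pad_strs: "odd_syms (pad k s @ pad k t) = odd_syms (s @ t)"
    if "s \<in> ?I" "t \<in> ?I" "even (length s) = even (length t)" for s t
    using odd_syms_pad that by (simp add: strs_le_def)
  have E: "?E s t = (if even (length s) = even (length t) then Z (pad k s) (pad k t) else 0)"
    if "s \<in> ?I" "t \<in> ?I" for s t
    using that by (simp add: padded_extension_def)
  have psd: "psd_on ?I ?E"
    unfolding psd_on_def
  proof (intro conjI ballI allI)
    fix s t assume "s \<in> ?I" "t \<in> ?I"
    then show "?E s t = ?E t s"
      using Z_sym pad_in E by simp
  next
    fix v :: "nat list \<Rightarrow> real"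
    have "(\<Sum>s\<in>?I. \<Sum>t\<in>?I. v s * ?E s t * v t) = (\<Sum>s\<in>?I. \<Sum>t\<in>?I.
           v s * (if even (length s) = even (length t) then Z (pad k s) (pad k t) else 0) * v t)"
      using E by (intro sum.cong refl) simp
    also have "\<dots> \<ge> 0"
      using Z_psd pad_in
      by (intro quadratic_form_nonneg_pullback_blocks[OF finite_strs_le finite_strs_eq]) auto
    finally show "0 \<le> (\<Sum>s\<in>?I. \<Sum>t\<in>?I. v s * ?E s t * v t)" .
  qed
  show ?thesis
    unfolding pseudomoment_on_def
  proof (intro conjI allI impI ballI psd)
    fix s t assume "s \<notin> ?I \<or> t \<notin> ?I"
    then show "?E s t = 0"
      by (auto simp: padded_extension_def)
  next
    fix s t s' t' assume in_I: "s \<in> ?I" "t \<in> ?I" "s' \<in> ?I" "t' \<in> ?I"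
      and odd: "odd_syms (s @ t) = odd_syms (s' @ t')"
    have "even (length s) = even (length t) \<longleftrightarrow> even (length s') = even (length t')"
      using even_length_append_eq_if_odd_syms_eq[OF odd] by simp
    then show "?E s t = ?E s' t'"
      using Z_odd_syms pad_in odd_syms_pad_strs in_I odd E by simp
  next
    fix s t assume in_I: "s \<in> ?I" "t \<in> ?I" and odd: "odd_syms (s @ t) = {}"
    have "even (length s) = even (length t)"
      using even_length_iff_even_card_odd_syms[of "s @ t"] odd by simp
    then show "?E s t = 1"
      using Z_one pad_in odd_syms_pad_strs in_I odd E by simp
  qed
qed

lemma submatrix_padded_extension:
  assumes "pseudomoment_on (strs_eq N k) Z"
  shows "submatrix (strs_eq N k) (padded_extension N k Z) = Z"
proof -
  have "submatrix (strs_eq N k) (padded_extension N k Z) s t = submatrix (strs_eq N k) Z s t"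
    for s t
  proof (cases "s \<in> strs_eq N k \<and> t \<in> strs_eq N k")
    case True
    then have "s \<in> strs_le N k" "t \<in> strs_le N k" "length s = length t"
      using strs_eq_subset_strs_le by (auto simp: strs_eq_def)
    with True show ?thesis
      using pad_strs_eq[of s N k] pad_strs_eq[of t N k]
      by (simp add: submatrix_def padded_extension_def)
  qed (auto simp: submatrix_def)
  then show ?thesis
    using submatrix_eq_self[OF assms] by (metis ext)
qed

lemma pseudomoment_on_Nil: "pseudomoment_on {[]} (\<lambda>s t. if s = [] \<and> t = [] then 1 else 0)"
  unfolding pseudomoment_on_def psd_on_def by simp

lemma pseudomoment_on_empty_iff: "pseudomoment_on {} Z \<longleftrightarrow> Z = (\<lambda>s t. 0)"
  unfolding pseudomoment_on_def psd_on_def by auto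

lemma submatrix_image_complete_pm_subset:
  "submatrix (strs_eq N (d div 2)) ` complete_pm N d \<subseteq> truncated_pm N d"
  using pseudomoment_on_submatrix[OF _ strs_eq_subset_strs_le finite_strs_le]
  by (auto simp: complete_pm_def truncated_pm_def)

lemma truncated_pm_subset_submatrix_image:
  assumes "0 < k"
  shows "truncated_pm N (2 * k) \<subseteq> submatrix (strs_eq N k) ` complete_pm N (2 * k)"
proof
  fix Z assume Z: "Z \<in> truncated_pm N (2 * k)"
  show "Z \<in> submatrix (strs_eq N k) ` complete_pm N (2 * k)"
  proof (cases "N = 0")
    case True
    \<comment> \<open>no padding symbol exists, but then only the empty string is short enough\<close>
    let ?Z\<^sub>0 = "\<lambda>s t. if s = [] \<and> t = [] then 1 else 0"
    from True have "strs_eq N k = {}" "strs_le N k = {[]}"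
      using assms by (auto simp: strs_eq_def strs_le_def)
    then have "Z = submatrix (strs_eq N k) ?Z\<^sub>0" and "?Z\<^sub>0 \<in> complete_pm N (2 * k)"
      using Z pseudomoment_on_Nil
      by (simp_all add: truncated_pm_def complete_pm_def pseudomoment_on_empty_iff submatrix_def)
    then show ?thesis
      by blast
  next
    case False
    then have "padded_extension N k Z \<in> complete_pm N (2 * k)"
      and "submatrix (strs_eq N k) (padded_extension N k Z) = Z"
      using Z pseudomoment_on_padded_extension submatrix_padded_extension
      by (simp_all add: truncated_pm_def complete_pm_def)
    then show ?thesis
      by (metis image_eqI)
  qed
qed

theorem mainTheorem14:
  fixes N d :: nat
  assumes "even d" and "0 < d"
  shows "truncated_pm N d = submatrix (strs_eq N (d div 2)) ` complete_pm N d"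
proof -
  obtain k where d: "d = 2 * k" and "0 < k"
    using assms by (auto elim: evenE)
  then have "truncated_pm N d \<subseteq> submatrix (strs_eq N (d div 2)) ` complete_pm N d"
    using truncated_pm_subset_submatrix_image by simp
  with submatrix_image_complete_pm_subset show ?thesis
    by (rule antisym[rotated])
qed

end
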